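(* Let $T$ be a tree in which every nontrivial pseudo-supremum is a supremum. Then $T$ is monotonically normal in each of the coarse wedge topology, the fine wedge topology, and the chevron topology.
   Context: A tree is a partially ordered set in which the set of predecessors of each element is well-ordered. Levels: $T(0)$ is the set of minimal elements; $T(\alpha)$ is the set of minimal elements of $T\setminus\bigcup_{\beta<\alpha}T(\beta)$; successor levels are $T(\alpha+1)$. For a nonempty chain $C$ bounded above, its pseudo-supremum is the set of minimal upper bounds of $C$; the standing assumption is that each such set is a singleton. For $t\in T$, $V_t=\{s:s\ge t\}$. Fine wedge topology: subbase all $V_t$ and $T\setminus V_t$. Coarse wedge topology: subbase all $V_t$ and $T\setminus V_t$ with $t$ minimal or on a successor level. Chevron topology: base consisting of all $\{m\}$ with $m$ minimal, together with all sets $C[s,t]=(V_s\setminus V_t)\cup\{t\}$ where $s\le t$ and $s$ is minimal or on a successor level. *)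

theory Defs
  imports "HOL-Analysis.Analysis"
begin

definition is_tree :: "'a::order set \<Rightarrow> bool" where
  "is_tree T \<longleftrightarrow> (\<forall>t\<in>T. \<forall>A. A \<subseteq> {s\<in>T. s < t} \<and> A \<noteq> {} \<longrightarrow> (\<exists>m\<in>A. \<forall>a\<in>A. m \<le> a))"

definition is_chain :: "'a::order set \<Rightarrow> 'a set \<Rightarrow> bool" where
  "is_chain T C \<longleftrightarrow> C \<subseteq> T \<and> (\<forall>x\<in>C. \<forall>y\<in>C. x \<le> y \<or> y \<le> x)"

definition upper_bounds :: "'a::order set \<Rightarrow> 'a set \<Rightarrow> 'a set" where
  "upper_bounds T C = {u\<in>T. \<forall>c\<in>C. c \<le> u}"

definition pseudo_sup :: "'a::order set \<Rightarrow> 'a set \<Rightarrow> 'a set" where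
  "pseudo_sup T C = {u\<in>upper_bounds T C. \<forall>v\<in>upper_bounds T C. v \<le> u \<longrightarrow> v = u}"

definition is_supremum :: "'a::order set \<Rightarrow> 'a set \<Rightarrow> 'a \<Rightarrow> bool" where
  "is_supremum T C t \<longleftrightarrow> t \<in> upper_bounds T C \<and> (\<forall>u\<in>upper_bounds T C. t \<le> u)"

definition nontrivial_chain :: "'a::order set \<Rightarrow> 'a set \<Rightarrow> bool" where
  "nontrivial_chain T C \<longleftrightarrow> is_chain T C \<and> C \<noteq> {} \<and> upper_bounds T C \<noteq> {}
      \<and> \<not> (\<exists>m\<in>C. \<forall>c\<in>C. c \<le> m)"

definition cone :: "'a::order set \<Rightarrow> 'a \<Rightarrow> 'a set" where
  "cone T t = {s\<in>T. t \<le> s}"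

definition minimal_in :: "'a::order set \<Rightarrow> 'a \<Rightarrow> bool" where
  "minimal_in T t \<longleftrightarrow> t \<in> T \<and> \<not> (\<exists>s\<in>T. s < t)"

definition succ_level :: "'a::order set \<Rightarrow> 'a \<Rightarrow> bool" where
  "succ_level T t \<longleftrightarrow> t \<in> T \<and> (\<exists>m\<in>T. m < t \<and> (\<forall>s\<in>T. s < t \<longrightarrow> s \<le> m))"

definition fine_wedge :: "'a::order set \<Rightarrow> 'a topology" where
  "fine_wedge T = topology_generated_by
     ((\<lambda>t. cone T t) ` T \<union> (\<lambda>t. T - cone T t) ` T)"

definition coarse_wedge :: "'a::order set \<Rightarrow> 'a topology" where
  "coarse_wedge T = topology_generated_by
     ((\<lambda>t. cone T t) ` {t. minimal_in T t \<or> succ_level T t} \<union>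
      (\<lambda>t. T - cone T t) ` {t. minimal_in T t \<or> succ_level T t})"

definition chev :: "'a::order set \<Rightarrow> 'a \<Rightarrow> 'a \<Rightarrow> 'a set" where
  "chev T s t = (cone T s - cone T t) \<union> {t}"

definition chevron_top :: "'a::order set \<Rightarrow> 'a topology" where
  "chevron_top T = topology_generated_by
     ((\<lambda>m. {m}) ` {m. minimal_in T m} \<union>
      {chev T s t | s t. s \<in> T \<and> t \<in> T \<and> s \<le> t \<and> (minimal_in T s \<or> succ_level T s)})"

definition monotonically_normal :: "'a topology \<Rightarrow> bool" where
  "monotonically_normal X \<longleftrightarrow> t1_space X \<and>
     (\<exists>G::'a \<Rightarrow> 'a set \<Rightarrow> 'a set.
        (\<forall>x U. openin X U \<and> x \<in> U \<longrightarrow> openin X (G x U) \<and> x \<in> G x U \<and> G x U \<subseteq> U) \<and>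
        (\<forall>x y U V. openin X U \<and> x \<in> U \<and> openin X V \<and> y \<in> V \<and> G x U \<inter> G y V \<noteq> {}
             \<longrightarrow> x \<in> V \<or> y \<in> U))"

end

theory Submission
  imports Defs
begin

text \<open>For an open set \<open>U\<close> containing \<open>x\<close>, choose a node \<open>a \<le> x\<close> that is minimal or on a
  successor level with \<open>C[a,x] \<subseteq> U\<close> (in the fine wedge topology simply \<open>a = x\<close>), and let \<open>H(x,U)\<close> be \<open>C[a,x]\<close> together with all cones
  \<open>V\<^sub>c \<subseteq> U\<close> over immediate successors \<open>c\<close> of \<open>x\<close>. If \<open>H(x,U)\<close> and \<open>H(y,V)\<close> meet, the two
  chosen nodes are comparable, and following the branch through a common point forces
  \<open>x \<in> V\<close> or \<open>y \<in> U\<close>. The hypothesis on pseudo-suprema makes every limit node the supremum of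
  its predecessors; hence the least node below \<open>x\<close> but not below \<open>t\<close> is never a limit node,
  which yields the chevrons inside open sets of the coarse wedge and chevron topologies.
  Finally \<open>H(x,U)\<close> is open: in the chevron topology it is a union of basic sets, and in the
  wedge topologies it is \<open>V\<^sub>a\<close> minus the cones \<open>V\<^sub>c \<not>\<subseteq> U\<close>, of which there are finitely many
  because each subbasic set excludes the cone of at most one immediate successor of \<open>x\<close>.\<close>

definition nonlimit :: "'a::order set \<Rightarrow> 'a \<Rightarrow> bool" where
  "nonlimit T t \<longleftrightarrow> minimal_in T t \<or> succ_level T t"

definition immediate_succ :: "'a::order set \<Rightarrow> 'a \<Rightarrow> 'a \<Rightarrow> bool" where
  "immediate_succ T x c \<longleftrightarrow> c \<in> T \<and> x < c \<and> (\<forall>w\<in>T. x < w \<longrightarrow> \<not> w < c)"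

definition escaping_succs :: "'a::order set \<Rightarrow> 'a \<Rightarrow> 'a set \<Rightarrow> 'a set" where
  "escaping_succs T x U = {c. immediate_succ T x c \<and> \<not> cone T c \<subseteq> U}"

definition chevron_open :: "'a::order set \<Rightarrow> 'a set \<Rightarrow> bool" where
  "chevron_open T U \<longleftrightarrow> U \<subseteq> T \<and> (\<forall>x\<in>U. \<exists>a. nonlimit T a \<and> a \<le> x \<and> chev T a x \<subseteq> U)"

definition finite_escapes :: "'a::order set \<Rightarrow> 'a set \<Rightarrow> bool" where
  "finite_escapes T U \<longleftrightarrow> (\<forall>x\<in>U. finite (escaping_succs T x U))"

definition normality_nbhd :: "'a::order set \<Rightarrow> 'a \<Rightarrow> 'a \<Rightarrow> 'a set \<Rightarrow> 'a set" where
  "normality_nbhd T a x U = chev T a x \<union> \<Union>{cone T c | c. immediate_succ T x c \<and> cone T c \<subseteq> U}"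

lemma openin_topology_generated_by_coarsest:
  "openin (topology_generated_by S) U \<Longrightarrow> istopology P \<Longrightarrow> (\<And>s. s \<in> S \<Longrightarrow> P s) \<Longrightarrow> P U"
  by (metis generate_topology_on_coarsest openin_topology_generated_by_iff)

lemma mem_chev: "w \<in> chev T s t \<longleftrightarrow> w = t \<or> (w \<in> T \<and> s \<le> w \<and> \<not> t \<le> w)"
  by (auto simp: chev_def cone_def)

lemma chev_antimono: "a \<le> b \<Longrightarrow> chev T b x \<subseteq> chev T a x"
  by (auto simp: mem_chev)

lemma nonlimit_mem: "nonlimit T t \<Longrightarrow> t \<in> T"
  by (auto simp: nonlimit_def minimal_in_def succ_level_def)

lemma normality_nbhd_self: "x \<in> normality_nbhd T a x U"
  by (simp add: normality_nbhd_def mem_chev)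

lemma normality_nbhd_subset: "chev T a x \<subseteq> U \<Longrightarrow> normality_nbhd T a x U \<subseteq> U"
  unfolding normality_nbhd_def by blast

lemma openin_coarse_wedge_cone: "nonlimit T t \<Longrightarrow> openin (coarse_wedge T) (cone T t)"
  unfolding coarse_wedge_def by (rule topology_generated_by_Basis) (simp add: nonlimit_def)

lemma openin_coarse_wedge_cone_compl: "nonlimit T t \<Longrightarrow> openin (coarse_wedge T) (T - cone T t)"
  unfolding coarse_wedge_def by (rule topology_generated_by_Basis) (simp add: nonlimit_def)

lemma openin_fine_wedge_cone: "t \<in> T \<Longrightarrow> openin (fine_wedge T) (cone T t)"
  unfolding fine_wedge_def by (rule topology_generated_by_Basis) simp

lemma openin_fine_wedge_cone_compl: "t \<in> T \<Longrightarrow> openin (fine_wedge T) (T - cone T t)"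
  unfolding fine_wedge_def by (rule topology_generated_by_Basis) simp

lemma openin_coarse_wedge_imp_fine_wedge:
  "openin (coarse_wedge T) U \<Longrightarrow> openin (fine_wedge T) U"
  unfolding coarse_wedge_def
  by (erule openin_topology_generated_by_coarsest)
    (auto simp: fine_wedge_def minimal_in_def succ_level_def intro: topology_generated_by_Basis)

lemma istopology_finite_escapes: "istopology (finite_escapes T)"
  unfolding istopology_def finite_escapes_def
proof (intro conjI allI impI ballI)
  fix A B x assume "\<forall>x\<in>A. finite (escaping_succs T x A)" "\<forall>x\<in>B. finite (escaping_succs T x B)"
    and "x \<in> A \<inter> B"
  then have "finite (escaping_succs T x A \<union> escaping_succs T x B)" by auto
  then show "finite (escaping_succs T x (A \<inter> B))"
    by (rule finite_subset[rotated]) (auto simp: escaping_succs_def)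
next
  fix K x assume "\<forall>A\<in>K. \<forall>x\<in>A. finite (escaping_succs T x A)" and "x \<in> \<Union>K"
  then obtain A where "A \<in> K" "x \<in> A" "finite (escaping_succs T x A)" by auto
  moreover have "escaping_succs T x (\<Union>K) \<subseteq> escaping_succs T x A"
    using \<open>A \<in> K\<close> by (auto simp: escaping_succs_def)
  ultimately show "finite (escaping_succs T x (\<Union>K))" by (metis finite_subset)
qed

lemma finite_escapes_cone: "finite_escapes T (cone T t)"
proof -
  have "escaping_succs T x (cone T t) = {}" if "x \<in> cone T t" for x
    using that by (auto simp: escaping_succs_def immediate_succ_def cone_def
        dest: order.strict_implies_order intro: order.trans)
  then show ?thesis by (simp add: finite_escapes_def)
qed

locale order_tree =
  fixes T :: "'a::order set"
  assumes tree: "is_tree T"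
begin

lemma least_below:
  assumes "x \<in> T" "A \<subseteq> {v\<in>T. v \<le> x}" "A \<noteq> {}"
  shows "\<exists>m\<in>A. \<forall>a\<in>A. m \<le> a"
proof (cases "A - {x} = {}")
  case True
  then show ?thesis using assms by auto
next
  case False
  have "A - {x} \<subseteq> {s\<in>T. s < x}" using assms(2) by auto
  with tree assms(1) False obtain m where "m \<in> A - {x}" "\<forall>a\<in>A - {x}. m \<le> a"
    unfolding is_tree_def by blast
  moreover have "m \<le> x" using \<open>m \<in> A - {x}\<close> assms(2) by auto
  ultimately show ?thesis by (metis Diff_iff singletonD)
qed

lemma comparable_below:
  assumes "z \<in> T" "a \<in> T" "b \<in> T" "a \<le> z" "b \<le> z"
  shows "a \<le> b \<or> b \<le> a"
  using least_below[of z "{a, b}"] assms by auto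

lemma minimal_below:
  assumes "x \<in> T"
  obtains r where "minimal_in T r" "r \<le> x"
proof -
  obtain r where r: "r \<in> T" "r \<le> x" "\<forall>v\<in>T. v \<le> x \<longrightarrow> r \<le> v"
    using least_below[of x "{v\<in>T. v \<le> x}"] assms by auto
  then have "minimal_in T r"
    unfolding minimal_in_def by (meson order.trans order.strict_iff_not)
  with r show thesis using that by blast
qed

lemma immediate_succ_below:
  assumes "x \<in> T" "w \<in> T" "x < w"
  obtains c where "immediate_succ T x c" "c \<le> w"
proof -
  obtain c where c: "c \<in> T" "x < c" "c \<le> w" "\<forall>v\<in>T. x < v \<and> v \<le> w \<longrightarrow> c \<le> v"
    using least_below[of w "{v\<in>T. x < v \<and> v \<le> w}"] assms by auto
  then have "immediate_succ T x c"
    unfolding immediate_succ_def by (meson order.strict_iff_not order.trans)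
  with c show thesis using that by blast
qed

lemma immediate_succ_nonlimit:
  assumes "x \<in> T" "immediate_succ T x c"
  shows "nonlimit T c"
proof -
  have "s \<le> x" if "s \<in> T" "s < c" for s
    using comparable_below[of c s x] assms that
    by (auto simp: immediate_succ_def order.strict_iff_order)
  then show ?thesis
    using assms by (auto simp: nonlimit_def succ_level_def immediate_succ_def)
qed

lemma immediate_succ_unique:
  assumes "immediate_succ T x c" "immediate_succ T x d" "c \<le> w" "d \<le> w" "w \<in> T"
  shows "c = d"
  using comparable_below[of w c d] assms
  by (auto simp: immediate_succ_def order.strict_iff_order)

lemma topspace_coarse_wedge: "topspace (coarse_wedge T) = T"
proof (intro equalityI subsetI)
  fix x assume "x \<in> topspace (coarse_wedge T)"
  then show "x \<in> T" by (auto simp: coarse_wedge_def cone_def)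
next
  fix x assume "x \<in> T"
  then obtain r where "minimal_in T r" "r \<le> x" by (rule minimal_below)
  then have "openin (coarse_wedge T) (cone T r)" "x \<in> cone T r"
    using \<open>x \<in> T\<close> openin_coarse_wedge_cone by (auto simp: nonlimit_def cone_def)
  then show "x \<in> topspace (coarse_wedge T)" using openin_subset by blast
qed

lemma topspace_fine_wedge: "topspace (fine_wedge T) = T"
proof (intro equalityI subsetI)
  fix x assume "x \<in> topspace (fine_wedge T)"
  then show "x \<in> T" by (auto simp: fine_wedge_def cone_def)
next
  fix x assume "x \<in> T"
  then have "openin (fine_wedge T) (cone T x)" "x \<in> cone T x"
    using openin_fine_wedge_cone by (auto simp: cone_def)
  then show "x \<in> topspace (fine_wedge T)" using openin_subset by blast
qed

lemma topspace_chevron_top: "topspace (chevron_top T) = T"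
proof (intro equalityI subsetI)
  fix x assume "x \<in> topspace (chevron_top T)"
  then show "x \<in> T" by (auto simp: chevron_top_def mem_chev minimal_in_def)
next
  fix x assume "x \<in> T"
  then obtain r where "minimal_in T r" "r \<le> x" by (rule minimal_below)
  then have "openin (chevron_top T) (chev T r x)"
    unfolding chevron_top_def using \<open>x \<in> T\<close>
    by (intro topology_generated_by_Basis) (auto simp: minimal_in_def)
  then show "x \<in> topspace (chevron_top T)" using openin_subset by (fastforce simp: mem_chev)
qed

lemma normality_nbhd_eq:
  assumes x: "x \<in> T" and "a \<le> x"
  shows "normality_nbhd T a x U = cone T a \<inter> (\<Inter>c\<in>escaping_succs T x U. T - cone T c)"
proof (intro equalityI subsetI)
  fix w assume w: "w \<in> normality_nbhd T a x U"
  then consider "w \<in> chev T a x"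
    | d where "immediate_succ T x d" "cone T d \<subseteq> U" "w \<in> cone T d"
    unfolding normality_nbhd_def by blast
  then show "w \<in> cone T a \<inter> (\<Inter>c\<in>escaping_succs T x U. T - cone T c)"
  proof cases
    case 1
    have "\<not> c \<le> w" if "immediate_succ T x c" for c
      using 1 that by (auto simp: mem_chev immediate_succ_def dest: order.strict_trans2)
    then show ?thesis using 1 x \<open>a \<le> x\<close> by (auto simp: mem_chev cone_def escaping_succs_def)
  next
    case 2
    then have "w \<in> T" "d \<le> w" by (simp_all add: cone_def)
    have "a \<le> w"
      using \<open>a \<le> x\<close> 2(1) \<open>d \<le> w\<close> unfolding immediate_succ_def
      by (meson order.strict_implies_order order.trans)
    have "c \<notin> escaping_succs T x U" if "c \<le> w" for c
      using immediate_succ_unique[of x c d w] that 2 \<open>d \<le> w\<close> \<open>w \<in> T\<close>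
      by (auto simp: escaping_succs_def)
    then show ?thesis using \<open>w \<in> T\<close> \<open>a \<le> w\<close> by (auto simp: cone_def)
  qed
next
  fix w assume w: "w \<in> cone T a \<inter> (\<Inter>c\<in>escaping_succs T x U. T - cone T c)"
  then have "w \<in> T" "a \<le> w" by (auto simp: cone_def)
  show "w \<in> normality_nbhd T a x U"
  proof (cases "x < w")
    case True
    then obtain c where c: "immediate_succ T x c" "c \<le> w"
      using immediate_succ_below x \<open>w \<in> T\<close> by blast
    then have "w \<in> cone T c" using \<open>w \<in> T\<close> by (simp add: cone_def)
    then have "c \<notin> escaping_succs T x U" using w by blast
    then have "cone T c \<subseteq> U" using c(1) by (simp add: escaping_succs_def)
    then show ?thesis using c(1) \<open>w \<in> cone T c\<close> unfolding normality_nbhd_def by blast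
  next
    case False
    then have "w \<in> chev T a x"
      using \<open>w \<in> T\<close> \<open>a \<le> w\<close> by (auto simp: mem_chev less_le)
    then show ?thesis unfolding normality_nbhd_def by blast
  qed
qed

lemma normality_nbhds_disjoint:
  assumes x: "x \<in> T" and y: "y \<in> T" and b: "b \<in> T" and "a \<le> b" "a \<le> x" "b \<le> y"
    and U: "chev T a x \<subseteq> U" "y \<notin> U" and V: "chev T b y \<subseteq> V" "x \<notin> V"
  shows "normality_nbhd T a x U \<inter> normality_nbhd T b y V = {}"
proof (rule equals0I)
  fix z assume z: "z \<in> normality_nbhd T a x U \<inter> normality_nbhd T b y V"
  have "b \<in> V" using V(1) b \<open>b \<le> y\<close> by (auto simp: mem_chev)
  show False
  proof (cases "x \<le> b")
    case True
    then have "x < b" using \<open>b \<in> V\<close> V(2) by (auto simp: less_le)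
    have "z \<in> cone T b"
      using z normality_nbhd_eq[OF y \<open>b \<le> y\<close>] by blast
    then have "z \<in> T" "x < z" using \<open>x < b\<close> by (auto simp: cone_def)
    from z consider "z \<in> chev T a x"
      | c where "immediate_succ T x c" "cone T c \<subseteq> U" "c \<le> z"
      unfolding normality_nbhd_def cone_def by blast
    then show False
    proof cases
      case 1
      then show False using \<open>x < z\<close> by (auto simp: mem_chev less_le)
    next
      case 2
      then have "c \<in> T" "\<not> b < c" using \<open>x < b\<close> b by (auto simp: immediate_succ_def)
      moreover have "c \<le> b \<or> b \<le> c"
        using comparable_below[OF \<open>z \<in> T\<close> \<open>c \<in> T\<close> b \<open>c \<le> z\<close>] \<open>z \<in> cone T b\<close>
        by (simp add: cone_def)
      ultimately have "c \<le> b" by (auto simp: less_le)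
      then have "y \<in> cone T c" using \<open>b \<le> y\<close> y by (auto simp: cone_def intro: order.trans)
      then show False using 2 U(2) by blast
    qed
  next
    case False
    have "x \<le> y"
    proof (rule ccontr)
      assume "\<not> x \<le> y"
      then have "y \<in> chev T a x"
        using y \<open>a \<le> b\<close> \<open>b \<le> y\<close> by (auto simp: mem_chev intro: order.trans)
      then show False using U by blast
    qed
    then have "b \<le> x" using comparable_below[OF y b x \<open>b \<le> y\<close>] False by blast
    moreover have "x \<noteq> y" using U by (auto simp: mem_chev)
    ultimately have "x \<in> chev T b y" using x \<open>x \<le> y\<close> by (auto simp: mem_chev)
    then show False using V by blast
  qed
qed

lemma normality_nbhds_meet:
  assumes x: "x \<in> T" and y: "y \<in> T"
    and a: "a \<in> T" "a \<le> x" "chev T a x \<subseteq> U" and b: "b \<in> T" "b \<le> y" "chev T b y \<subseteq> V"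
    and meet: "normality_nbhd T a x U \<inter> normality_nbhd T b y V \<noteq> {}"
  shows "x \<in> V \<or> y \<in> U"
proof (rule ccontr)
  assume out: "\<not> (x \<in> V \<or> y \<in> U)"
  obtain z where "z \<in> cone T a" "z \<in> cone T b"
    using meet normality_nbhd_eq[OF x a(2)] normality_nbhd_eq[OF y b(2)] by blast
  then have "a \<le> b \<or> b \<le> a"
    using comparable_below[of z a b] a(1) b(1) by (simp add: cone_def)
  then show False
  proof
    assume "a \<le> b"
    then show False
      using normality_nbhds_disjoint[OF x y b(1) _ a(2) b(2) a(3) _ b(3)] out meet by blast
  next
    assume "b \<le> a"
    then show False
      using normality_nbhds_disjoint[OF y x a(1) _ b(2) a(2) b(3) _ a(3)] out meet by blast
  qed
qed

lemma monotonically_normalI: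
  assumes X: "topspace X = T" "t1_space X"
    and nbhd: "\<And>x U. openin X U \<Longrightarrow> x \<in> U \<Longrightarrow>
      \<exists>a\<in>T. a \<le> x \<and> chev T a x \<subseteq> U \<and> openin X (normality_nbhd T a x U)"
  shows "monotonically_normal X"
proof -
  define A where "A x U = (SOME a. a \<in> T \<and> a \<le> x \<and> chev T a x \<subseteq> U
    \<and> openin X (normality_nbhd T a x U))" for x U
  have A: "A x U \<in> T" "A x U \<le> x" "chev T (A x U) x \<subseteq> U"
    "openin X (normality_nbhd T (A x U) x U)" if "openin X U" "x \<in> U" for x U
    using someI_ex[OF nbhd[OF that, unfolded Bex_def]] unfolding A_def by blast+
  define G where "G x U = normality_nbhd T (A x U) x U" for x U
  have "openin X (G x U)" "x \<in> G x U" "G x U \<subseteq> U" if "openin X U" "x \<in> U" for x U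
    using A[OF that] normality_nbhd_self normality_nbhd_subset unfolding G_def by blast+
  then have "\<forall>x U. openin X U \<and> x \<in> U \<longrightarrow> openin X (G x U) \<and> x \<in> G x U \<and> G x U \<subseteq> U"
    by simp
  moreover have "\<forall>x y U V. openin X U \<and> x \<in> U \<and> openin X V \<and> y \<in> V \<and> G x U \<inter> G y V \<noteq> {}
      \<longrightarrow> x \<in> V \<or> y \<in> U"
  proof (intro allI impI, elim conjE)
    fix x y U V
    assume opens: "openin X U" "x \<in> U" "openin X V" "y \<in> V" and "G x U \<inter> G y V \<noteq> {}"
    moreover have "x \<in> T" "y \<in> T"
      using openin_subset[OF opens(1)] openin_subset[OF opens(3)] opens(2,4) X(1) by auto
    ultimately show "x \<in> V \<or> y \<in> U"
      using normality_nbhds_meet A[OF opens(1,2)] A[OF opens(3,4)] unfolding G_def by blast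
  qed
  ultimately show ?thesis
    unfolding monotonically_normal_def using X(2) by (intro conjI exI[of _ G]) simp_all
qed

lemma openin_normality_nbhd_wedge:
  assumes "x \<in> T" "a \<le> x" "finite (escaping_succs T x U)" "openin X (cone T a)"
    and "\<And>c. immediate_succ T x c \<Longrightarrow> openin X (T - cone T c)"
  shows "openin X (normality_nbhd T a x U)"
  unfolding normality_nbhd_eq[OF assms(1,2)]
  by (rule openin_Int_Inter) (use assms in \<open>auto simp: escaping_succs_def\<close>)

lemma istopology_chevron_open: "istopology (chevron_open T)"
  unfolding istopology_def
proof (intro conjI allI impI)
  fix A B assume A: "chevron_open T A" and B: "chevron_open T B"
  have "\<exists>a. nonlimit T a \<and> a \<le> x \<and> chev T a x \<subseteq> A \<inter> B" if x: "x \<in> A \<inter> B" for x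
  proof -
    obtain a b where ab: "nonlimit T a" "a \<le> x" "chev T a x \<subseteq> A"
      "nonlimit T b" "b \<le> x" "chev T b x \<subseteq> B"
      using A B x unfolding chevron_open_def by blast
    have "x \<in> T" using A x unfolding chevron_open_def by blast
    then have "a \<le> b \<or> b \<le> a"
      using comparable_below[OF _ nonlimit_mem nonlimit_mem] ab by blast
    then show ?thesis
    proof
      assume "a \<le> b"
      then have "chev T b x \<subseteq> A \<inter> B" using chev_antimono[of a b T x] ab(3,6) by blast
      then show ?thesis using ab by blast
    next
      assume "b \<le> a"
      then have "chev T a x \<subseteq> A \<inter> B" using chev_antimono[of b a T x] ab(3,6) by blast
      then show ?thesis using ab by blast
    qed
  qed
  moreover have "A \<inter> B \<subseteq> T" using A unfolding chevron_open_def by blast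
  ultimately show "chevron_open T (A \<inter> B)" unfolding chevron_open_def by blast
next
  fix K assume K: "\<forall>A\<in>K. chevron_open T A"
  show "chevron_open T (\<Union>K)"
    unfolding chevron_open_def
  proof (intro conjI ballI)
    show "\<Union>K \<subseteq> T" using K by (auto simp: chevron_open_def)
    fix x assume "x \<in> \<Union>K"
    then obtain A where "A \<in> K" "x \<in> A" by blast
    then obtain a where "nonlimit T a" "a \<le> x" "chev T a x \<subseteq> A"
      using K unfolding chevron_open_def by blast
    then show "\<exists>a. nonlimit T a \<and> a \<le> x \<and> chev T a x \<subseteq> \<Union>K"
      using \<open>A \<in> K\<close> by blast
  qed
qed

lemma chevron_open_cone:
  assumes "nonlimit T t"
  shows "chevron_open T (cone T t)"
  unfolding chevron_open_def
proof (intro conjI ballI)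
  fix x assume "x \<in> cone T t"
  then have "chev T t x \<subseteq> cone T t" by (auto simp: mem_chev cone_def)
  then show "\<exists>a. nonlimit T a \<and> a \<le> x \<and> chev T a x \<subseteq> cone T t"
    using assms \<open>x \<in> cone T t\<close> by (auto simp: cone_def)
qed (auto simp: cone_def)

lemma finite_escapes_cone_compl:
  assumes t: "t \<in> T"
  shows "finite_escapes T (T - cone T t)"
  unfolding finite_escapes_def
proof
  fix x assume x: "x \<in> T - cone T t"
  then have "x \<in> T" "\<not> t \<le> x" by (auto simp: cone_def)
  have below_t: "c \<le> t" if esc: "c \<in> escaping_succs T x (T - cone T t)" for c
  proof -
    obtain w where c: "immediate_succ T x c" and w: "w \<in> T" "c \<le> w" "t \<le> w"
      using esc unfolding escaping_succs_def cone_def by blast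
    then have "c \<in> T" "x < c" by (auto simp: immediate_succ_def)
    have "\<not> t < c"
    proof
      assume "t < c"
      then have "t \<le> x \<or> x \<le> t"
        using comparable_below[OF \<open>c \<in> T\<close> t \<open>x \<in> T\<close>] \<open>x < c\<close> by simp
      then have "x < t" using \<open>\<not> t \<le> x\<close> by (auto simp: less_le)
      then show False using c t \<open>t < c\<close> unfolding immediate_succ_def by blast
    qed
    moreover have "c \<le> t \<or> t \<le> c"
      using comparable_below[OF w(1) \<open>c \<in> T\<close> t w(2,3)] .
    ultimately show "c \<le> t" by (auto simp: less_le)
  qed
  show "finite (escaping_succs T x (T - cone T t))"
  proof (cases "escaping_succs T x (T - cone T t) = {}")
    case False
    then obtain c where c: "c \<in> escaping_succs T x (T - cone T t)" by blast
    have "d = c" if "d \<in> escaping_succs T x (T - cone T t)" for d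
      using immediate_succ_unique[of x d c t] below_t[OF that] below_t[OF c] that c t
      by (simp add: escaping_succs_def)
    then have "escaping_succs T x (T - cone T t) \<subseteq> {c}" by blast
    then show ?thesis by (rule finite_subset) simp
  qed simp
qed

lemma openin_fine_wedge_finite_escapes:
  "openin (fine_wedge T) U \<Longrightarrow> finite_escapes T U"
  unfolding fine_wedge_def
  by (erule openin_topology_generated_by_coarsest[OF _ istopology_finite_escapes])
    (use finite_escapes_cone finite_escapes_cone_compl in blast)

end

locale psup_tree = order_tree +
  assumes psup_is_sup:
    "\<And>C t. nontrivial_chain T C \<Longrightarrow> t \<in> pseudo_sup T C \<Longrightarrow> is_supremum T C t"
begin

lemma limit_is_sup_of_predecessors:
  assumes r: "r \<in> T" and "\<not> nonlimit T r"
  shows "is_supremum T {s\<in>T. s < r} r"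
proof -
  let ?C = "{s\<in>T. s < r}"
  have "?C \<noteq> {}" using assms by (auto simp: nonlimit_def minimal_in_def)
  have no_max: "\<not> (\<exists>m\<in>?C. \<forall>c\<in>?C. c \<le> m)"
    using assms by (auto simp: nonlimit_def succ_level_def)
  have "is_chain T ?C"
    unfolding is_chain_def using comparable_below[OF r] by (auto simp: less_le)
  have r_ub: "r \<in> upper_bounds T ?C" using r by (auto simp: upper_bounds_def less_le)
  have "r \<in> pseudo_sup T ?C"
  proof -
    have "v = r" if "v \<in> upper_bounds T ?C" "v \<le> r" for v
    proof (rule ccontr)
      assume "v \<noteq> r"
      then have "v \<in> ?C" using that by (auto simp: upper_bounds_def less_le)
      then show False using no_max that(1) by (auto simp: upper_bounds_def)
    qed
    then show ?thesis using r_ub by (simp add: pseudo_sup_def)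
  qed
  moreover have "nontrivial_chain T ?C"
    unfolding nontrivial_chain_def using \<open>is_chain T ?C\<close> \<open>?C \<noteq> {}\<close> r_ub no_max by blast
  ultimately show ?thesis using psup_is_sup by blast
qed

lemma nonlimit_separator:
  assumes x: "x \<in> T" and t: "t \<in> T" and "\<not> x \<le> t"
  obtains r where "nonlimit T r" "r \<le> x" "\<not> r \<le> t"
proof -
  obtain r where r: "r \<in> T" "r \<le> x" "\<not> r \<le> t"
    and least: "\<forall>v\<in>T. v \<le> x \<and> \<not> v \<le> t \<longrightarrow> r \<le> v"
    using least_below[of x "{v\<in>T. v \<le> x \<and> \<not> v \<le> t}"] assms by auto
  have "s \<le> t" if "s \<in> T" "s < r" for s
    using least that r(2) by (meson order.strict_iff_not order.trans)
  then have "t \<in> upper_bounds T {s\<in>T. s < r}" using t by (simp add: upper_bounds_def)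
  then have "nonlimit T r"
    using limit_is_sup_of_predecessors[OF r(1)] r(3) by (auto simp: is_supremum_def)
  then show thesis using that r by blast
qed

lemma chevron_open_cone_compl:
  assumes t: "t \<in> T"
  shows "chevron_open T (T - cone T t)"
  unfolding chevron_open_def
proof (intro conjI ballI)
  fix x assume "x \<in> T - cone T t"
  then have x: "x \<in> T" "\<not> t \<le> x" by (auto simp: cone_def)
  obtain a where a: "nonlimit T a" "a \<le> x" and "x < t \<or> \<not> a \<le> t"
  proof (cases "x \<le> t")
    case True
    then have "x < t" using x(2) by (auto simp: less_le)
    obtain r where "minimal_in T r" "r \<le> x" using minimal_below[OF x(1)] .
    then show thesis using that[of r] \<open>x < t\<close> by (simp add: nonlimit_def)
  next
    case False
    then show thesis using that nonlimit_separator[OF x(1) t] by blast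
  qed
  have "w \<notin> cone T t" if "w \<in> chev T a x" for w
  proof
    assume "w \<in> cone T t"
    then have w: "w \<in> T" "t \<le> w" by (simp_all add: cone_def)
    show False
    proof (cases "w = x")
      case False
      then have "a \<le> w" "\<not> x \<le> w" using that by (simp_all add: mem_chev)
      then have "\<not> x < t" using w(2) by (auto dest: order.strict_trans2 simp: less_le)
      then have "\<not> a \<le> t" using \<open>x < t \<or> \<not> a \<le> t\<close> by blast
      then have "t \<le> a"
        using comparable_below[OF w(1) nonlimit_mem[OF a(1)] t \<open>a \<le> w\<close> w(2)] by blast
      then show False using a(2) x(2) order.trans by blast
    qed (use w x in blast)
  qed
  then have "chev T a x \<subseteq> T - cone T t" using x(1) a by (auto simp: mem_chev)
  then show "\<exists>a. nonlimit T a \<and> a \<le> x \<and> chev T a x \<subseteq> T - cone T t" using a by blast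
qed blast

lemma chevron_open_chev:
  assumes s: "nonlimit T s" and t: "t \<in> T" "s \<le> t"
  shows "chevron_open T (chev T s t)"
  unfolding chevron_open_def
proof (intro conjI ballI)
  show "chev T s t \<subseteq> T" using t by (auto simp: mem_chev)
  fix x assume x: "x \<in> chev T s t"
  show "\<exists>a. nonlimit T a \<and> a \<le> x \<and> chev T a x \<subseteq> chev T s t"
  proof (cases "x = t")
    case True
    then show ?thesis using s t by blast
  next
    case False
    have "chevron_open T (cone T s \<inter> (T - cone T t))"
      using istopology_chevron_open chevron_open_cone[OF s] chevron_open_cone_compl[OF t(1)]
      unfolding istopology_def by blast
    moreover have "x \<in> cone T s \<inter> (T - cone T t)"
      using x False by (auto simp: mem_chev cone_def)
    ultimately obtain a where "nonlimit T a" "a \<le> x" "chev T a x \<subseteq> cone T s \<inter> (T - cone T t)"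
      unfolding chevron_open_def by blast
    moreover have "cone T s \<inter> (T - cone T t) \<subseteq> chev T s t" by (auto simp: mem_chev cone_def)
    ultimately show ?thesis by blast
  qed
qed

lemma openin_chevron_top_iff: "openin (chevron_top T) U \<longleftrightarrow> chevron_open T U"
proof
  assume "openin (chevron_top T) U"
  then show "chevron_open T U"
    unfolding chevron_top_def
  proof (rule openin_topology_generated_by_coarsest[OF _ istopology_chevron_open])
    fix S assume "S \<in> (\<lambda>m. {m}) ` {m. minimal_in T m} \<union>
      {chev T s t | s t. s \<in> T \<and> t \<in> T \<and> s \<le> t \<and> (minimal_in T s \<or> succ_level T s)}"
    then consider m where "minimal_in T m" "S = {m}"
      | s t where "nonlimit T s" "t \<in> T" "s \<le> t" "S = chev T s t"
      unfolding nonlimit_def by blast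
    then show "chevron_open T S"
    proof cases
      case 1
      then have "chev T m m = S" "m \<in> T" by (auto simp: mem_chev minimal_in_def)
      then show ?thesis using 1 by (auto simp: chevron_open_def nonlimit_def)
    next
      case 2
      then show ?thesis using chevron_open_chev by blast
    qed
  qed
next
  assume U: "chevron_open T U"
  show "openin (chevron_top T) U"
  proof (subst openin_subopen, intro ballI)
    fix x assume "x \<in> U"
    then obtain a where a: "nonlimit T a" "a \<le> x" "chev T a x \<subseteq> U"
      using U unfolding chevron_open_def by blast
    have "x \<in> T" using U \<open>x \<in> U\<close> by (auto simp: chevron_open_def)
    then have "openin (chevron_top T) (chev T a x)"
      unfolding chevron_top_def using a nonlimit_mem[OF a(1)]
      by (intro topology_generated_by_Basis) (auto simp: nonlimit_def)
    then show "\<exists>V. openin (chevron_top T) V \<and> x \<in> V \<and> V \<subseteq> U"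
      using a(3) by (auto simp: mem_chev)
  qed
qed

lemma openin_coarse_wedge_imp_chevron_top:
  "openin (coarse_wedge T) U \<Longrightarrow> openin (chevron_top T) U"
  unfolding coarse_wedge_def
proof (erule openin_topology_generated_by_coarsest[OF _ istopology_openin])
  fix S assume "S \<in> cone T ` {t. minimal_in T t \<or> succ_level T t} \<union>
      (\<lambda>t. T - cone T t) ` {t. minimal_in T t \<or> succ_level T t}"
  then obtain t where "nonlimit T t" "S = cone T t \<or> S = T - cone T t"
    unfolding nonlimit_def by blast
  then show "openin (chevron_top T) S"
    using chevron_open_cone chevron_open_cone_compl[OF nonlimit_mem] openin_chevron_top_iff by blast
qed

lemma t1_space_coarse_wedge: "t1_space (coarse_wedge T)"
  unfolding t1_space_def topspace_coarse_wedge
proof (intro ballI impI)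
  fix x y assume x: "x \<in> T" and y: "y \<in> T" and "x \<noteq> y"
  show "\<exists>U. openin (coarse_wedge T) U \<and> x \<in> U \<and> y \<notin> U"
  proof (cases "x \<le> y")
    case True
    then obtain c where c: "immediate_succ T x c" "c \<le> y"
      using immediate_succ_below[OF x y] \<open>x \<noteq> y\<close> by (auto simp: less_le)
    then have "x \<in> T - cone T c" "y \<notin> T - cone T c"
      using x y by (auto simp: cone_def immediate_succ_def)
    then show ?thesis
      using openin_coarse_wedge_cone_compl[OF immediate_succ_nonlimit[OF x c(1)]] by blast
  next
    case False
    then obtain r where r: "nonlimit T r" "r \<le> x" "\<not> r \<le> y"
      using nonlimit_separator[OF x y] by blast
    then have "x \<in> cone T r" "y \<notin> cone T r" using x by (auto simp: cone_def)
    then show ?thesis using openin_coarse_wedge_cone[OF r(1)] by blast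
  qed
qed

lemma t1_space_fine_wedge: "t1_space (fine_wedge T)"
  by (rule t1_space_expansive[OF _ openin_coarse_wedge_imp_fine_wedge t1_space_coarse_wedge])
    (simp add: topspace_fine_wedge topspace_coarse_wedge)

lemma t1_space_chevron_top: "t1_space (chevron_top T)"
  by (rule t1_space_expansive[OF _ openin_coarse_wedge_imp_chevron_top t1_space_coarse_wedge])
    (simp add: topspace_chevron_top topspace_coarse_wedge)

lemma monotonically_normal_coarse_wedge: "monotonically_normal (coarse_wedge T)"
proof (rule monotonically_normalI[OF topspace_coarse_wedge t1_space_coarse_wedge])
  fix x U assume U: "openin (coarse_wedge T) U" and "x \<in> U"
  have "chevron_open T U"
    using openin_coarse_wedge_imp_chevron_top[OF U] openin_chevron_top_iff by blast
  then obtain a where a: "nonlimit T a" "a \<le> x" "chev T a x \<subseteq> U" and "x \<in> T"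
    using \<open>x \<in> U\<close> unfolding chevron_open_def by blast
  have "finite (escaping_succs T x U)"
    using openin_fine_wedge_finite_escapes[OF openin_coarse_wedge_imp_fine_wedge[OF U]] \<open>x \<in> U\<close>
    by (simp add: finite_escapes_def)
  then have "openin (coarse_wedge T) (normality_nbhd T a x U)"
    using openin_normality_nbhd_wedge[OF \<open>x \<in> T\<close> a(2)] openin_coarse_wedge_cone[OF a(1)]
      openin_coarse_wedge_cone_compl[OF immediate_succ_nonlimit[OF \<open>x \<in> T\<close>]] by blast
  then show "\<exists>a\<in>T. a \<le> x \<and> chev T a x \<subseteq> U \<and> openin (coarse_wedge T) (normality_nbhd T a x U)"
    using a nonlimit_mem by blast
qed

lemma monotonically_normal_fine_wedge: "monotonically_normal (fine_wedge T)"
proof (rule monotonically_normalI[OF topspace_fine_wedge t1_space_fine_wedge])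
  fix x U assume U: "openin (fine_wedge T) U" and "x \<in> U"
  then have "x \<in> T" using openin_subset topspace_fine_wedge by blast
  have "chev T x x \<subseteq> U" using \<open>x \<in> U\<close> by (auto simp: mem_chev)
  have "finite (escaping_succs T x U)"
    using openin_fine_wedge_finite_escapes[OF U] \<open>x \<in> U\<close> by (simp add: finite_escapes_def)
  moreover have "openin (fine_wedge T) (T - cone T c)" if "immediate_succ T x c" for c
    using that by (intro openin_fine_wedge_cone_compl) (simp add: immediate_succ_def)
  ultimately have "openin (fine_wedge T) (normality_nbhd T x x U)"
    using openin_normality_nbhd_wedge[OF \<open>x \<in> T\<close> order.refl] openin_fine_wedge_cone[OF \<open>x \<in> T\<close>]
    by blast
  then show "\<exists>a\<in>T. a \<le> x \<and> chev T a x \<subseteq> U \<and> openin (fine_wedge T) (normality_nbhd T a x U)"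
    using \<open>x \<in> T\<close> \<open>chev T x x \<subseteq> U\<close> by blast
qed

lemma monotonically_normal_chevron_top: "monotonically_normal (chevron_top T)"
proof (rule monotonically_normalI[OF topspace_chevron_top t1_space_chevron_top])
  fix x U assume U: "openin (chevron_top T) U" and "x \<in> U"
  then obtain a where a: "nonlimit T a" "a \<le> x" "chev T a x \<subseteq> U" and "x \<in> T"
    unfolding openin_chevron_top_iff chevron_open_def by blast
  have "openin (chevron_top T) (chev T a x)"
    using chevron_open_chev[OF a(1) \<open>x \<in> T\<close> a(2)] openin_chevron_top_iff by blast
  moreover have "openin (chevron_top T) (cone T c)" if "immediate_succ T x c" for c
    using chevron_open_cone[OF immediate_succ_nonlimit[OF \<open>x \<in> T\<close> that]] openin_chevron_top_iff
    by blast
  ultimately have "openin (chevron_top T) (normality_nbhd T a x U)"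
    unfolding normality_nbhd_def by blast
  then show "\<exists>a\<in>T. a \<le> x \<and> chev T a x \<subseteq> U \<and> openin (chevron_top T) (normality_nbhd T a x U)"
    using a nonlimit_mem by blast
qed

end

theorem theorem4p2:
  fixes T :: "'a::order set"
  assumes tree: "is_tree T"
    and standing: "\<And>C. is_chain T C \<Longrightarrow> C \<noteq> {} \<Longrightarrow> upper_bounds T C \<noteq> {} \<Longrightarrow>
                     \<exists>t. pseudo_sup T C = {t}"
    and psup: "\<And>C t. nontrivial_chain T C \<Longrightarrow> t \<in> pseudo_sup T C \<Longrightarrow> is_supremum T C t"
  shows "monotonically_normal (coarse_wedge T) \<and> monotonically_normal (fine_wedge T)
         \<and> monotonically_normal (chevron_top T)"
proof -
  interpret psup_tree T
    using tree psup by unfold_locales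
  show ?thesis
    using monotonically_normal_coarse_wedge monotonically_normal_fine_wedge
      monotonically_normal_chevron_top by blast
qed

end
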